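(* Let $P=(p_1,\dots,p_S)$ be a probability distribution on $\{1,\dots,S\}$ and $\hat P_n$ the empirical distribution of $n$ i.i.d. samples from $P$. Then, as $n\to\infty$, the bias $b=\mathbb E[Q(\hat P_n)]-Q(P)$ satisfies $|b|=\mathcal O\big(S\log(n)/n\big)$, i.e. $b^2=\mathcal O\big((S\log(n)/n)^2\big)$.
   Context: For a probability vector $P=(p_1,\dots,p_S)$, $Q(P)=\sum_{k=1}^S p_k\log^2(p_k)$, with the convention $0\log^2 0=0$. The empirical distribution is $\hat P_n=(N_1/n,\dots,N_S/n)$ where $N_k$ is the number of samples equal to $k$. *)

theory Defs
  imports "HOL-Probability.Probability"
begin

text \<open>Q(P) = sum_{k=1}^S p_k (log p_k)^2 (natural log); the convention 0 log^2 0 = 0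
  holds automatically since the term is multiplied by p_k = 0.\<close>
definition Qfun :: "nat \<Rightarrow> (nat \<Rightarrow> real) \<Rightarrow> real" where
  "Qfun S p = (\<Sum>k\<in>{1..S}. p k * (ln (p k))\<^sup>2)"

definition samples :: "nat \<Rightarrow> nat pmf \<Rightarrow> (nat \<Rightarrow> nat) pmf" where
  "samples n P = Pi_pmf {..<n} 0 (\<lambda>_. P)"

definition empirical :: "nat \<Rightarrow> (nat \<Rightarrow> nat) \<Rightarrow> nat \<Rightarrow> real" where
  "empirical n \<omega> k = real (card {i\<in>{..<n}. \<omega> i = k}) / real n"

definition bias :: "nat \<Rightarrow> nat pmf \<Rightarrow> nat \<Rightarrow> real" where
  "bias S P n = measure_pmf.expectation (samples n P) (\<lambda>\<omega>. Qfun S (empirical n \<omega>))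
               - Qfun S (pmf P)"

end

theory Submission
  imports Defs
begin

text \<open>Write \<open>f x = x (ln x)\<^sup>2\<close>, so that \<open>Q(P) = \<Sum>\<^sub>k f p\<^sub>k\<close>, and let \<open>X = N\<^sub>k/n\<close> with mean \<open>p = p\<^sub>k\<close>
  and variance \<open>p(1-p)/n\<close>. If \<open>p \<ge> 1/n\<close>, the distance of \<open>f\<close> from its tangent at \<open>p\<close> is at most
  \<open>(x-p)\<^sup>2 (1 + 2\<bar>ln p\<bar>)/p\<close>; taking expectations gives
  \<open>\<bar>E f(X) - f p\<bar> \<le> (1-p)(1 + 2\<bar>ln p\<bar>)/n \<le> (1 + 2 ln n)/n\<close>. If \<open>p < 1/n\<close>, then \<open>X\<close> takes values in
  \<open>{0} \<union> [1/n, 1]\<close>, where \<open>f X\<close> lies between \<open>X ln\<^sup>2 n - 2 ln n \<cdot> N(N-1)/n\<close> and \<open>X ln\<^sup>2 n\<close>;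
  with \<open>E N(N-1) = n(n-1)p\<^sup>2\<close> both \<open>E f(X)\<close> and \<open>f p\<close> are within \<open>(1 + 4 ln n)/n\<close> of \<open>p ln\<^sup>2 n\<close>.
  Summing over the \<open>S\<close> symbols gives the bound.\<close>

section \<open>Elementary inequalities for \<open>x (ln x)\<^sup>2\<close>\<close>

lemma sq_minus_one_minus_two_mult_ln_mono:
  assumes "0 < (u::real)" "u \<le> v"
  shows "u\<^sup>2 - 1 - 2 * u * ln u \<le> v\<^sup>2 - 1 - 2 * v * ln v"
proof (rule DERIV_nonneg_imp_nondecreasing[OF assms(2)])
  fix x :: real assume x: "u \<le> x" "x \<le> v"
  show "\<exists>y. DERIV (\<lambda>v. v\<^sup>2 - 1 - 2 * v * ln v) x :> y \<and> y \<ge> 0"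
    using x assms ln_le_minus_one[of x]
    by (intro exI[of _ "2 * x - 2 * ln x - 2"]) (auto intro!: derivative_eq_intros)
qed

lemma abs_two_mult_ln_le:
  assumes "0 < (v::real)"
  shows "\<bar>2 * v * ln v\<bar> \<le> \<bar>v\<^sup>2 - 1\<bar>"
proof (cases "v \<ge> 1")
  case True
  thus ?thesis using sq_minus_one_minus_two_mult_ln_mono[of 1 v] by simp
next
  case False
  have "2 * v * ln v \<le> 0" using False assms by (simp add: mult_nonneg_nonpos)
  moreover have "v\<^sup>2 \<le> 1" using False assms by (simp add: power_le_one)
  ultimately show ?thesis
    using sq_minus_one_minus_two_mult_ln_mono[of v 1] False assms by (simp add: abs_of_nonpos)
qed

lemma mult_ln_squared_le:
  assumes "0 < (u::real)"
  shows "u * (ln u)\<^sup>2 \<le> (u - 1)\<^sup>2"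
proof -
  define v where "v = sqrt u"
  have v: "0 < v" "v\<^sup>2 = u" using assms by (auto simp: v_def)
  have "u * (ln u)\<^sup>2 = (2 * v * ln v)\<^sup>2"
    using v assms by (simp add: v_def ln_sqrt power2_eq_square)
  also have "\<dots> \<le> (v\<^sup>2 - 1)\<^sup>2"
    using abs_two_mult_ln_le[OF v(1)] by (simp add: abs_le_square_iff)
  finally show ?thesis using v by simp
qed

lemma mult_ln_minus_plus_one_bounds:
  assumes "0 < (u::real)"
  shows "0 \<le> u * ln u - u + 1" and "u * ln u - u + 1 \<le> (u - 1)\<^sup>2"
proof -
  have "- ln u \<le> 1 / u - 1"
    using assms ln_le_minus_one[of "1 / u"] by (simp add: ln_div)
  hence "u * (- ln u) \<le> u * (1 / u - 1)" using assms by (intro mult_left_mono) auto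
  thus "0 \<le> u * ln u - u + 1" using assms by (simp add: algebra_simps)
  have "u * ln u \<le> u * (u - 1)" using assms ln_le_minus_one[of u] by (intro mult_left_mono) auto
  thus "u * ln u - u + 1 \<le> (u - 1)\<^sup>2" by (simp add: power2_eq_square algebra_simps)
qed

text \<open>\<open>(ln p)\<^sup>2 + 2 ln p\<close> is the derivative of \<open>x (ln x)\<^sup>2\<close> at \<open>p\<close>.\<close>

lemma mult_ln_squared_tangent_error:
  assumes p: "0 < (p::real)" and x: "0 \<le> x"
  shows "\<bar>x * (ln x)\<^sup>2 - p * (ln p)\<^sup>2 - ((ln p)\<^sup>2 + 2 * ln p) * (x - p)\<bar>
           \<le> (x - p)\<^sup>2 * (1 + 2 * \<bar>ln p\<bar>) / p"
proof (cases "x = 0")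
  case True
  have "\<bar>2 * p * ln p\<bar> \<le> p\<^sup>2 * (1 + 2 * \<bar>ln p\<bar>) / p"
    using p by (simp add: power2_eq_square abs_mult field_simps)
  thus ?thesis using True by (simp add: algebra_simps power2_eq_square)
next
  case False
  define u where "u = x / p"
  have u: "0 < u" using x p False by (simp add: u_def)
  have xu: "x = p * u" using p by (simp add: u_def)
  have "x * (ln x)\<^sup>2 = p * u * (ln p + ln u)\<^sup>2" using p u by (simp add: xu ln_mult)
  hence remainder: "x * (ln x)\<^sup>2 - p * (ln p)\<^sup>2 - ((ln p)\<^sup>2 + 2 * ln p) * (x - p)
      = 2 * ln p * (p * (u * ln u - u + 1)) + p * (u * (ln u)\<^sup>2)"
    by (simp add: xu power2_eq_square algebra_simps)
  have "\<bar>2 * ln p * (p * (u * ln u - u + 1))\<bar> \<le> 2 * \<bar>ln p\<bar> * (p * (u - 1)\<^sup>2)"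
    using mult_ln_minus_plus_one_bounds[OF u] p by (simp add: abs_mult mult_left_mono)
  moreover have "\<bar>p * (u * (ln u)\<^sup>2)\<bar> \<le> p * (u - 1)\<^sup>2"
    using mult_ln_squared_le[OF u] p u by (simp add: abs_mult mult_left_mono)
  moreover have "(x - p)\<^sup>2 * (1 + 2 * \<bar>ln p\<bar>) / p = p * (u - 1)\<^sup>2 + 2 * \<bar>ln p\<bar> * (p * (u - 1)\<^sup>2)"
    using p by (simp add: xu power2_eq_square field_simps)
  ultimately show ?thesis unfolding remainder by linarith
qed

lemma ratio_mult_ln_squared_le:
  fixes m n :: nat
  assumes "m \<le> n"
  shows "real m / n * (ln (real m / n))\<^sup>2 \<le> real m / n * (ln n)\<^sup>2"
proof (cases "m = 0")
  case False
  have "0 \<le> ln m" "ln m \<le> ln n" using False assms by auto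
  hence "\<bar>ln m - ln n\<bar> \<le> \<bar>ln n\<bar>" by auto
  hence "(ln m - ln n)\<^sup>2 \<le> (ln n)\<^sup>2" using abs_le_square_iff by blast
  thus ?thesis using False assms by (simp add: ln_div mult_left_mono divide_right_mono)
qed simp

lemma ratio_mult_ln_squared_ge:
  fixes m n :: nat
  assumes "m \<le> n"
  shows "real m / n * (ln n)\<^sup>2 - 2 * ln n * ((real m)\<^sup>2 - m) / n \<le> real m / n * (ln (real m / n))\<^sup>2"
proof (cases "m = 0")
  case False
  have "0 \<le> ln n" using False assms by simp
  hence "real m * (2 * ln n * ln m) \<le> real m * (2 * ln n * (real m - 1))"
    using False ln_le_minus_one[of m] by (intro mult_left_mono) auto
  hence "real m * (ln n)\<^sup>2 - 2 * ln n * ((real m)\<^sup>2 - m) \<le> real m * ((ln n)\<^sup>2 - 2 * ln n * ln m)"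
    by (simp add: power2_eq_square algebra_simps)
  also have "\<dots> \<le> real m * (ln m - ln n)\<^sup>2"
    by (intro mult_left_mono) (auto simp: power2_eq_square algebra_simps)
  finally have "real m * (ln n)\<^sup>2 - 2 * ln n * ((real m)\<^sup>2 - m) \<le> real m * (ln m - ln n)\<^sup>2" .
  hence "(real m * (ln n)\<^sup>2 - 2 * ln n * ((real m)\<^sup>2 - m)) / n \<le> real m * (ln m - ln n)\<^sup>2 / n"
    by (rule divide_right_mono) simp
  thus ?thesis using False assms by (simp add: ln_div diff_divide_distrib)
qed simp

lemma small_mass_ln_squared_ge:
  assumes "1 \<le> (n::real)" "0 \<le> p" "p < 1 / n"
  shows "p * (ln n)\<^sup>2 \<le> p * (ln p)\<^sup>2"
proof (cases "p = 0")
  case False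
  have "ln p < - ln n" using False assms ln_less_cancel_iff[of p "1 / n"] by (simp add: ln_div)
  hence "\<bar>ln n\<bar> \<le> \<bar>ln p\<bar>" using assms by simp
  hence "(ln n)\<^sup>2 \<le> (ln p)\<^sup>2" using abs_le_square_iff by blast
  thus ?thesis using assms by (simp add: mult_left_mono)
qed simp

lemma small_mass_ln_squared_le:
  assumes n: "1 \<le> (n::real)" and p: "0 \<le> p" "p < 1 / n"
  shows "p * (ln p)\<^sup>2 - p * (ln n)\<^sup>2 + 2 * ln n * (n - 1) * p\<^sup>2 \<le> (1 + 4 * ln n) / n"
proof (cases "p = 0")
  case True
  thus ?thesis using n by simp
next
  case False
  define t where "t = n * p"
  have t: "0 < t" "t < 1" using False p n by (auto simp: t_def field_simps)
  have pt: "p = t / n" using n by (simp add: t_def)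
  have lnn: "0 \<le> ln n" using n by simp
  have "t * (ln t)\<^sup>2 \<le> 1"
  proof -
    have "t * (ln t)\<^sup>2 \<le> (t - 1)\<^sup>2" using mult_ln_squared_le t by simp
    also have "\<dots> \<le> 1" using t by (simp add: power2_eq_square algebra_simps)
    finally show ?thesis .
  qed
  moreover have "t * (- ln t) * ln n \<le> ln n"
  proof -
    have "t * (- ln t) \<le> 1" using mult_ln_minus_plus_one_bounds(1)[of t] t by simp
    thus ?thesis using lnn mult_right_mono by fastforce
  qed
  moreover have "(n - 1) / n * t\<^sup>2 * ln n \<le> ln n"
  proof -
    have "(n - 1) / n * t\<^sup>2 \<le> 1" using t n by (intro mult_le_one power_le_one) auto
    thus ?thesis using lnn mult_right_mono by fastforce
  qed
  moreover have "p * (ln p)\<^sup>2 - p * (ln n)\<^sup>2 + 2 * ln n * (n - 1) * p\<^sup>2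
      = (t * (ln t)\<^sup>2 + 2 * (t * (- ln t) * ln n) + 2 * ((n - 1) / n * t\<^sup>2 * ln n)) / n"
    using t n by (simp add: pt ln_div field_simps power2_eq_square)
  ultimately show ?thesis using n by (simp add: divide_right_mono)
qed

section \<open>Moments of the symbol counts\<close>

lemma integrable_samples:
  "finite (set_pmf P) \<Longrightarrow> integrable (measure_pmf (samples n P)) (f :: _ \<Rightarrow> real)"
  unfolding samples_def by (intro integrable_measure_pmf_finite) (auto simp: set_Pi_pmf)

lemma expectation_of_bool_eq_pmf:
  "measure_pmf.expectation P (\<lambda>x. of_bool (x = k) :: real) = pmf P k"
proof -
  have "(\<lambda>x. of_bool (x = k) :: real) = indicator {k}" by (auto simp: indicator_def)
  thus ?thesis by (simp add: measure_pmf_single)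
qed

lemma expectation_samples_component:
  assumes "i < n"
  shows "measure_pmf.expectation (samples n P) (\<lambda>\<omega>. g (\<omega> i) :: real) = measure_pmf.expectation P g"
proof -
  have "map_pmf (\<lambda>\<omega>. \<omega> i) (samples n P) = P"
    unfolding samples_def using assms by (subst Pi_pmf_component) auto
  thus ?thesis by (metis integral_map_pmf)
qed

lemma expectation_samples_pair:
  assumes "i < n" "j < n" "i \<noteq> j" and fin: "finite (set_pmf P)"
  shows "measure_pmf.expectation (samples n P) (\<lambda>\<omega>. of_bool (\<omega> i = k) * of_bool (\<omega> j = k) :: real)
         = (pmf P k)\<^sup>2"
proof -
  define f where "f = (\<lambda>x v. if x \<in> {i, j} then of_bool (v = k) else (1::real))"
  have ij: "{..<n} \<inter> {i, j} = {i, j}" using assms by auto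
  have prod_f: "(\<Prod>x<n. f x (\<omega> x)) = of_bool (\<omega> i = k) * of_bool (\<omega> j = k)" for \<omega>
    unfolding f_def prod.inter_restrict[OF finite_lessThan, symmetric] ij using assms(3) by simp
  have "measure_pmf.expectation (samples n P) (\<lambda>\<omega>. \<Prod>x<n. f x (\<omega> x))
        = (\<Prod>x<n. measure_pmf.expectation P (f x))"
    unfolding samples_def
    by (rule expectation_prod_Pi_pmf) (auto simp: f_def fin intro!: integrable_measure_pmf_finite)
  also have "\<dots> = (\<Prod>x<n. if x \<in> {i, j} then pmf P k else 1)"
    by (intro prod.cong) (auto simp: f_def expectation_of_bool_eq_pmf)
  also have "\<dots> = (pmf P k)\<^sup>2"
    unfolding prod.inter_restrict[OF finite_lessThan, symmetric] ij using assms(3)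
    by (simp add: power2_eq_square)
  finally show ?thesis unfolding prod_f .
qed

definition sample_count :: "nat \<Rightarrow> nat \<Rightarrow> (nat \<Rightarrow> nat) \<Rightarrow> real" where
  "sample_count n k \<omega> = (\<Sum>i<n. of_bool (\<omega> i = k))"

lemma sample_count_eq_card: "sample_count n k \<omega> = real (card {i\<in>{..<n}. \<omega> i = k})"
proof -
  have "{i\<in>{..<n}. \<omega> i = k} = {..<n} \<inter> {i. \<omega> i = k}" by auto
  thus ?thesis unfolding sample_count_def by simp
qed

lemma empirical_eq_sample_count: "empirical n \<omega> k = sample_count n k \<omega> / n"
  unfolding empirical_def sample_count_eq_card ..

lemma sample_count_cases:
  obtains m where "m \<le> n" "sample_count n k \<omega> = real m"
  using card_mono[of "{..<n}" "{i\<in>{..<n}. \<omega> i = k}"] by (auto simp: sample_count_eq_card)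

lemma expectation_sample_count:
  assumes "finite (set_pmf P)"
  shows "measure_pmf.expectation (samples n P) (sample_count n k) = n * pmf P k"
proof -
  have "measure_pmf.expectation (samples n P) (sample_count n k) =
        (\<Sum>i<n. measure_pmf.expectation (samples n P) (\<lambda>\<omega>. of_bool (\<omega> i = k)))"
    unfolding sample_count_def by (rule Bochner_Integration.integral_sum) (simp add: integrable_samples assms)
  also have "\<dots> = (\<Sum>i<n. pmf P k)"
    by (intro sum.cong refl)
       (simp add: expectation_samples_component[where g = "\<lambda>v. of_bool (v = k)"] expectation_of_bool_eq_pmf)
  finally show ?thesis by simp
qed

lemma expectation_sample_count_falling:
  assumes fin: "finite (set_pmf P)"
  shows "measure_pmf.expectation (samples n P) (\<lambda>\<omega>. (sample_count n k \<omega>)\<^sup>2 - sample_count n k \<omega>)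
         = real n * (real n - 1) * (pmf P k)\<^sup>2"
proof -
  let ?E = "measure_pmf.expectation (samples n P)"
  let ?I = "\<lambda>i \<omega>. of_bool (\<omega> i = k) :: real"
  have falling: "(sample_count n k \<omega>)\<^sup>2 - sample_count n k \<omega> = (\<Sum>i<n. \<Sum>j\<in>{..<n} - {i}. ?I i \<omega> * ?I j \<omega>)" for \<omega>
  proof -
    have "(sample_count n k \<omega>)\<^sup>2 = (\<Sum>i<n. \<Sum>j<n. ?I i \<omega> * ?I j \<omega>)"
      unfolding sample_count_def power2_eq_square by (rule sum_product)
    also have "\<dots> = (\<Sum>i<n. ?I i \<omega> + (\<Sum>j\<in>{..<n} - {i}. ?I i \<omega> * ?I j \<omega>))"
      by (intro sum.cong refl, subst sum.remove) auto
    also have "\<dots> = sample_count n k \<omega> + (\<Sum>i<n. \<Sum>j\<in>{..<n} - {i}. ?I i \<omega> * ?I j \<omega>)"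
      unfolding sample_count_def by (rule sum.distrib)
    finally show ?thesis by simp
  qed
  have "?E (\<lambda>\<omega>. (sample_count n k \<omega>)\<^sup>2 - sample_count n k \<omega>)
         = (\<Sum>i<n. \<Sum>j\<in>{..<n} - {i}. ?E (\<lambda>\<omega>. ?I i \<omega> * ?I j \<omega>))"
    unfolding falling
    by (subst Bochner_Integration.integral_sum, simp add: integrable_samples fin,
        intro sum.cong refl, rule Bochner_Integration.integral_sum, simp add: integrable_samples fin)
  also have "\<dots> = (\<Sum>i<n. \<Sum>j\<in>{..<n} - {i}. (pmf P k)\<^sup>2)"
    by (intro sum.cong refl) (auto intro: expectation_samples_pair fin)
  finally show ?thesis by (simp add: of_nat_diff)
qed

section \<open>The bias of a single symbol\<close>

lemma expectation_empirical:
  assumes "finite (set_pmf P)" "0 < n"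
  shows "measure_pmf.expectation (samples n P) (\<lambda>\<omega>. empirical n \<omega> k) = pmf P k"
  unfolding empirical_eq_sample_count using assms by (simp add: expectation_sample_count)

lemma expectation_empirical_sq_dev:
  assumes fin: "finite (set_pmf P)" and n: "0 < n"
  shows "measure_pmf.expectation (samples n P) (\<lambda>\<omega>. (empirical n \<omega> k - pmf P k)\<^sup>2)
         = pmf P k * (1 - pmf P k) / n"
proof -
  let ?N = "sample_count n k"
  let ?p = "pmf P k"
  let ?E = "measure_pmf.expectation (samples n P)"
  have "(\<lambda>\<omega>. (empirical n \<omega> k - ?p)\<^sup>2)
        = (\<lambda>\<omega>. ((?N \<omega>)\<^sup>2 - ?N \<omega>) / n\<^sup>2 + (1 / n\<^sup>2 - 2 * ?p / n) * ?N \<omega> + ?p\<^sup>2)"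
    using n by (auto simp: empirical_eq_sample_count power2_eq_square field_simps)
  hence "?E (\<lambda>\<omega>. (empirical n \<omega> k - ?p)\<^sup>2)
         = ?E (\<lambda>\<omega>. (?N \<omega>)\<^sup>2 - ?N \<omega>) / n\<^sup>2 + (1 / n\<^sup>2 - 2 * ?p / n) * ?E ?N + ?p\<^sup>2"
    by (simp add: integrable_samples fin)
  also have "\<dots> = ?p * (1 - ?p) / n"
    unfolding expectation_sample_count[OF fin] expectation_sample_count_falling[OF fin]
    using n by (simp add: power2_eq_square field_simps)
  finally show ?thesis .
qed

lemma empirical_bias_large_mass:
  assumes fin: "finite (set_pmf P)" and n: "0 < n" and p: "1 / n \<le> pmf P k"
  shows "\<bar>measure_pmf.expectation (samples n P) (\<lambda>\<omega>. empirical n \<omega> k * (ln (empirical n \<omega> k))\<^sup>2)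
           - pmf P k * (ln (pmf P k))\<^sup>2\<bar> \<le> (1 + 2 * ln n) / n"
proof -
  let ?E = "measure_pmf.expectation (samples n P)"
  let ?X = "\<lambda>\<omega>. empirical n \<omega> k"
  let ?p = "pmf P k"
  define c where "c = (ln ?p)\<^sup>2 + 2 * ln ?p"
  define K where "K = (1 + 2 * \<bar>ln ?p\<bar>) / ?p"
  have "0 < 1 / real n" using n by simp
  hence p0: "0 < ?p" using p by linarith
  have remainder: "?E (\<lambda>\<omega>. ?X \<omega> * (ln (?X \<omega>))\<^sup>2) - ?p * (ln ?p)\<^sup>2
        = ?E (\<lambda>\<omega>. ?X \<omega> * (ln (?X \<omega>))\<^sup>2 - ?p * (ln ?p)\<^sup>2 - c * (?X \<omega> - ?p))"
    using expectation_empirical[OF fin n] by (simp add: integrable_samples fin)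
  have "\<bar>?E (\<lambda>\<omega>. ?X \<omega> * (ln (?X \<omega>))\<^sup>2 - ?p * (ln ?p)\<^sup>2 - c * (?X \<omega> - ?p))\<bar> \<le> ?E (\<lambda>\<omega>. \<bar>?X \<omega> * (ln (?X \<omega>))\<^sup>2 - ?p * (ln ?p)\<^sup>2 - c * (?X \<omega> - ?p)\<bar>)"
    by (rule integral_abs_bound)
  also have "\<dots> \<le> ?E (\<lambda>\<omega>. (?X \<omega> - ?p)\<^sup>2 * K)"
  proof (rule integral_mono[OF integrable_samples[OF fin] integrable_samples[OF fin]])
    fix \<omega>
    have "0 \<le> ?X \<omega>" by (simp add: empirical_def)
    thus "\<bar>?X \<omega> * (ln (?X \<omega>))\<^sup>2 - ?p * (ln ?p)\<^sup>2 - c * (?X \<omega> - ?p)\<bar> \<le> (?X \<omega> - ?p)\<^sup>2 * K"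
      unfolding c_def K_def using mult_ln_squared_tangent_error[OF p0] by simp
  qed
  also have "\<dots> = (1 - ?p) * (1 + 2 * \<bar>ln ?p\<bar>) / n"
    using expectation_empirical_sq_dev[OF fin n] p0 by (simp add: K_def)
  also have "\<dots> \<le> (1 + 2 * ln n) / n"
  proof -
    have "ln (1 / n) \<le> ln ?p" using p p0 n by (subst ln_le_cancel_iff) auto
    moreover have "ln ?p \<le> 0" using p0 pmf_le_1 by simp
    ultimately have "1 + 2 * \<bar>ln ?p\<bar> \<le> 1 + 2 * ln n" using n by (simp add: ln_div)
    moreover have "(1 - ?p) * (1 + 2 * \<bar>ln ?p\<bar>) \<le> 1 + 2 * \<bar>ln ?p\<bar>"
      using p0 pmf_le_1 by (intro mult_left_le_one_le) auto
    ultimately show ?thesis by (intro divide_right_mono) auto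
  qed
  finally show ?thesis unfolding remainder .
qed

lemma empirical_bias_small_mass:
  assumes fin: "finite (set_pmf P)" and n: "0 < n" and p: "pmf P k < 1 / n"
  shows "\<bar>measure_pmf.expectation (samples n P) (\<lambda>\<omega>. empirical n \<omega> k * (ln (empirical n \<omega> k))\<^sup>2)
           - pmf P k * (ln (pmf P k))\<^sup>2\<bar> \<le> (1 + 4 * ln n) / n"
proof -
  let ?E = "measure_pmf.expectation (samples n P)"
  let ?N = "sample_count n k"
  let ?X = "\<lambda>\<omega>. empirical n \<omega> k"
  let ?p = "pmf P k"
  have "?E (\<lambda>\<omega>. ?X \<omega> * (ln (?X \<omega>))\<^sup>2) \<le> ?E (\<lambda>\<omega>. ?X \<omega> * (ln n)\<^sup>2)"
  proof (rule integral_mono)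
    fix \<omega>
    obtain m where "m \<le> n" "?N \<omega> = real m" by (rule sample_count_cases)
    thus "?X \<omega> * (ln (?X \<omega>))\<^sup>2 \<le> ?X \<omega> * (ln n)\<^sup>2"
      using ratio_mult_ln_squared_le by (simp add: empirical_eq_sample_count)
  qed (simp_all add: integrable_samples fin)
  hence upper: "?E (\<lambda>\<omega>. ?X \<omega> * (ln (?X \<omega>))\<^sup>2) \<le> ?p * (ln n)\<^sup>2"
    using expectation_empirical[OF fin n] by simp
  have "?E (\<lambda>\<omega>. ?X \<omega> * (ln n)\<^sup>2 - 2 * ln n * ((?N \<omega>)\<^sup>2 - ?N \<omega>) / n)
        \<le> ?E (\<lambda>\<omega>. ?X \<omega> * (ln (?X \<omega>))\<^sup>2)"
  proof (rule integral_mono)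
    fix \<omega>
    obtain m where "m \<le> n" "?N \<omega> = real m" by (rule sample_count_cases)
    thus "?X \<omega> * (ln n)\<^sup>2 - 2 * ln n * ((?N \<omega>)\<^sup>2 - ?N \<omega>) / n \<le> ?X \<omega> * (ln (?X \<omega>))\<^sup>2"
      using ratio_mult_ln_squared_ge by (simp add: empirical_eq_sample_count)
  qed (simp_all add: integrable_samples fin)
  hence lower: "?p * (ln n)\<^sup>2 - 2 * ln n * (real n - 1) * ?p\<^sup>2 \<le> ?E (\<lambda>\<omega>. ?X \<omega> * (ln (?X \<omega>))\<^sup>2)"
    using expectation_empirical[OF fin n] expectation_sample_count_falling[OF fin, of n k] n
    by (simp add: integrable_samples fin power2_eq_square)
  have "1 \<le> real n" using n by simp
  note small = small_mass_ln_squared_ge[OF this _ p] small_mass_ln_squared_le[OF this _ p]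
  have "0 \<le> (1 + 4 * ln n) / n" using n by simp
  thus ?thesis using upper lower small by (simp add: abs_le_iff)
qed

lemma empirical_bias_le:
  assumes "finite (set_pmf P)" "0 < n"
  shows "\<bar>measure_pmf.expectation (samples n P) (\<lambda>\<omega>. empirical n \<omega> k * (ln (empirical n \<omega> k))\<^sup>2)
           - pmf P k * (ln (pmf P k))\<^sup>2\<bar> \<le> (1 + 4 * ln n) / n"
proof (cases "pmf P k < 1 / n")
  case False
  have "0 \<le> ln (real n)" using assms by simp
  hence "(1 + 2 * ln n) / n \<le> (1 + 4 * ln n) / n" by (simp add: divide_right_mono)
  moreover have "1 / n \<le> pmf P k" using False by simp
  ultimately show ?thesis using empirical_bias_large_mass[OF assms] by fastforce
qed (use empirical_bias_small_mass assms in blast)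

section \<open>The bias of \<open>Q\<close>\<close>

lemma bias_eq_sum:
  assumes "finite (set_pmf P)"
  shows "bias S P n = (\<Sum>k\<in>{1..S}.
           measure_pmf.expectation (samples n P) (\<lambda>\<omega>. empirical n \<omega> k * (ln (empirical n \<omega> k))\<^sup>2)
           - pmf P k * (ln (pmf P k))\<^sup>2)"
  unfolding bias_def Qfun_def
  by (subst Bochner_Integration.integral_sum) (auto simp: integrable_samples assms sum_subtractf)

lemma abs_bias_le:
  assumes "finite (set_pmf P)" "0 < n"
  shows "\<bar>bias S P n\<bar> \<le> S * (1 + 4 * ln n) / n"
proof -
  have "\<bar>bias S P n\<bar> \<le> (\<Sum>k\<in>{1..S}. \<bar>measure_pmf.expectation (samples n P)
           (\<lambda>\<omega>. empirical n \<omega> k * (ln (empirical n \<omega> k))\<^sup>2) - pmf P k * (ln (pmf P k))\<^sup>2\<bar>)"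
    unfolding bias_eq_sum[OF assms(1)] by (rule sum_abs)
  also have "\<dots> \<le> (\<Sum>k\<in>{1..S}. (1 + 4 * ln n) / n)"
    by (intro sum_mono empirical_bias_le assms)
  finally show ?thesis by simp
qed

theorem mainTheorem7:
  shows "\<exists>C N0. \<forall>S::nat. \<forall>P::nat pmf. \<forall>n::nat.
           S \<ge> 1 \<longrightarrow> set_pmf P \<subseteq> {1..S} \<longrightarrow> n \<ge> N0 \<longrightarrow>
           \<bar>bias S P n\<bar> \<le> C * real S * ln (real n) / real n"
proof (intro exI[of _ "5::real"] exI[of _ "3::nat"] allI impI)
  fix S :: nat and P :: "nat pmf" and n :: nat
  assume "1 \<le> S" and support: "set_pmf P \<subseteq> {1..S}" and n: "3 \<le> n"
  from support n have "\<bar>bias S P n\<bar> \<le> S * (1 + 4 * ln n) / n"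
    by (intro abs_bias_le) (auto intro: finite_subset)
  also have "\<dots> \<le> 5 * real S * ln n / n"
  proof -
    have "exp 1 \<le> real n" using exp_le n by linarith
    hence "1 \<le> ln n" using n by (subst ln_ge_iff) auto
    hence "S * (1 + 4 * ln n) \<le> 5 * real S * ln n"
      using mult_left_mono[of 1 "ln n" "real S"] by (simp add: algebra_simps)
    thus ?thesis by (intro divide_right_mono) auto
  qed
  finally show "\<bar>bias S P n\<bar> \<le> 5 * real S * ln n / n" .
qed

end
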